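(* Assume the setting and standing assumptions described in the context. For any given $\Delta\in\mathcal{D}$, $\lim_{\kappa\to+\infty}\rho(\Delta,\kappa)=-\infty$.
   Context: Let $n,m\ge 1$, $B\in\mathbb{Z}^{n\times m}$, $C\in\mathbb{Z}^{m\times n}$. Given bounds $0\le \Delta_j^-\le \Delta_j^+<\infty$ ($j=1,\dots,m$), let $\mathcal{D}$ be the set of diagonal matrices $\Delta=\mathrm{diag}(\Delta_1,\dots,\Delta_m)$ with $\Delta_j^-\le\Delta_j\le\Delta_j^+$. Let $J_2,J_4\in\mathbb{R}^{n\times n}$ be symmetric, with $J_2$ indefinite, $J_4$ negative semidefinite, and such that there exists $\bar\kappa$ with $\bar\kappa^2J_2+\bar\kappa^4J_4$ negative definite. Standing assumption: for every $\Delta\in\mathcal{D}$, $B\Delta C$ is singular and has $n-1$ eigenvalues (with multiplicity) with negative real part, and there is a nonzero $v\ge0$ with $v^\top B=0$. For real $\kappa\ge0$, $\rho(\Delta,\kappa)$ denotes the spectral abscissa (maximum real part of the eigenvalues) of $B\Delta C+\kappa^2J_2+\kappa^4J_4$. *)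

theory Defs
  imports "Jordan_Normal_Form.Char_Poly"
begin

definition cmat :: "real mat \<Rightarrow> complex mat" where
  "cmat A = map_mat complex_of_real A"

definition spectral_abscissa :: "real mat \<Rightarrow> real" where
  "spectral_abscissa A = Max (Re ` {z. eigenvalue (cmat A) z})"

definition num_neg_eigs :: "real mat \<Rightarrow> nat" where
  "num_neg_eigs A = (\<Sum>z\<in>{z. poly (char_poly (cmat A)) z = 0 \<and> Re z < 0}. order z (char_poly (cmat A)))"

definition rmat :: "int mat \<Rightarrow> real mat" where
  "rmat A = map_mat real_of_int A"

definition Dset :: "nat \<Rightarrow> (nat \<Rightarrow> real) \<Rightarrow> (nat \<Rightarrow> real) \<Rightarrow> real mat set" where
  "Dset m lo hi = {D. D \<in> carrier_mat m m \<and>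
     (\<forall>i<m. \<forall>j<m. i \<noteq> j \<longrightarrow> D $$ (i,j) = 0) \<and>
     (\<forall>j<m. lo j \<le> D $$ (j,j) \<and> D $$ (j,j) \<le> hi j)}"

definition symmetric_mat :: "real mat \<Rightarrow> bool" where
  "symmetric_mat A \<longleftrightarrow> transpose_mat A = A"

definition indefinite :: "nat \<Rightarrow> real mat \<Rightarrow> bool" where
  "indefinite n A \<longleftrightarrow> (\<exists>x \<in> carrier_vec n. x \<bullet> (A *\<^sub>v x) > 0) \<and>
                        (\<exists>y \<in> carrier_vec n. y \<bullet> (A *\<^sub>v y) < 0)"

definition neg_semidef :: "nat \<Rightarrow> real mat \<Rightarrow> bool" where
  "neg_semidef n A \<longleftrightarrow> (\<forall>x \<in> carrier_vec n. x \<bullet> (A *\<^sub>v x) \<le> 0)"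

definition neg_def :: "nat \<Rightarrow> real mat \<Rightarrow> bool" where
  "neg_def n A \<longleftrightarrow> (\<forall>x \<in> carrier_vec n. x \<noteq> 0\<^sub>v n \<longrightarrow> x \<bullet> (A *\<^sub>v x) < 0)"

definition Mk :: "int mat \<Rightarrow> int mat \<Rightarrow> real mat \<Rightarrow> real mat \<Rightarrow> real mat \<Rightarrow> real \<Rightarrow> real mat" where
  "Mk B C J2 J4 D \<kappa> = rmat B * D * rmat C + (\<kappa>^2) \<cdot>\<^sub>m J2 + (\<kappa>^4) \<cdot>\<^sub>m J4"

end

theory Submission
  imports Defs "Jordan_Normal_Form.Spectral_Radius" "HOL-Real_Asymp.Real_Asymp"
begin

(* Write M(kappa) = A + kappa^2 J2 + kappa^4 J4 with A = B Delta C. Since J4 is negative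
   semidefinite, for kappa^2 >= b = kb^2 the quadratic form of kappa^2 J2 + kappa^4 J4 is at most
   kappa^2/b times that of the negative definite matrix b J2 + b^2 J4, hence at most
   -gamma kappa^2 |x|^2; so x^T M(kappa) x <= (alpha - gamma kappa^2) |x|^2 for all real x.
   Splitting a complex eigenvector z = u + iv of the real matrix M(kappa) into real and imaginary
   parts gives Re(lambda) (|u|^2 + |v|^2) = u^T M u + v^T M v, so every eigenvalue has real part
   at most alpha - gamma kappa^2. *)

lemma scalar_prod_mult_mat_vec_double_sum:
  fixes A :: "'a::comm_semiring_0 mat"
  assumes "A \<in> carrier_mat nr nc" and "x \<in> carrier_vec nr" and "y \<in> carrier_vec nc"
  shows "x \<bullet> (A *\<^sub>v y) = (\<Sum>i<nr. \<Sum>j<nc. A $$ (i,j) * x $ i * y $ j)"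
  using assms
  by (auto simp: scalar_prod_def row_def sum_distrib_left atLeast0LessThan ac_simps intro!: sum.cong)

lemma quadratic_form_add:
  fixes A B :: "'a::comm_ring mat"
  assumes "A \<in> carrier_mat n n" and "B \<in> carrier_mat n n" and "x \<in> carrier_vec n"
  shows "x \<bullet> ((A + B) *\<^sub>v x) = x \<bullet> (A *\<^sub>v x) + x \<bullet> (B *\<^sub>v x)"
  using assms by (simp add: add_mult_distrib_mat_vec scalar_prod_add_distrib[of _ n])

lemma quadratic_form_smult:
  fixes A :: "'a::comm_ring mat"
  assumes "A \<in> carrier_mat n n" and "x \<in> carrier_vec n"
  shows "x \<bullet> ((a \<cdot>\<^sub>m A) *\<^sub>v x) = a * (x \<bullet> (A *\<^sub>v x))"
proof -
  have "(a \<cdot>\<^sub>m A) *\<^sub>v x = a \<cdot>\<^sub>v (A *\<^sub>v x)"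
    using assms by (intro eq_vecI) (auto simp: scalar_prod_def sum_distrib_left ac_simps)
  then show ?thesis using assms by simp
qed

lemma abs_mult_le_scalar_prod_self:
  fixes x :: "real vec"
  assumes "x \<in> carrier_vec n" and "i < n" and "j < n"
  shows "\<bar>x $ i * x $ j\<bar> \<le> x \<bullet> x"
proof -
  have sq_le: "(x $ k)\<^sup>2 \<le> x \<bullet> x" if "k < n" for k
    using assms(1) that
    by (auto simp: scalar_prod_def power2_eq_square intro!: member_le_sum)
  have "0 \<le> (\<bar>x $ i\<bar> - \<bar>x $ j\<bar>)\<^sup>2" by simp
  then have "2 * \<bar>x $ i * x $ j\<bar> \<le> (x $ i)\<^sup>2 + (x $ j)\<^sup>2"
    by (simp add: power2_diff abs_mult)
  then show ?thesis using sq_le[OF assms(2)] sq_le[OF assms(3)] by linarith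
qed

lemma quadratic_form_bounded:
  fixes A :: "real mat"
  assumes A: "A \<in> carrier_mat n n"
  shows "\<exists>\<beta>>0. \<forall>x\<in>carrier_vec n. x \<bullet> (A *\<^sub>v x) \<le> \<beta> * (x \<bullet> x)"
proof (intro exI conjI ballI)
  define \<sigma> where "\<sigma> = (\<Sum>i<n. \<Sum>j<n. \<bar>A $$ (i,j)\<bar>)"
  have "0 \<le> \<sigma>" unfolding \<sigma>_def by (intro sum_nonneg) auto
  then show "0 < \<sigma> + 1" by simp
  fix x :: "real vec" assume x: "x \<in> carrier_vec n"
  have "x \<bullet> (A *\<^sub>v x) = (\<Sum>i<n. \<Sum>j<n. A $$ (i,j) * x $ i * x $ j)"
    by (rule scalar_prod_mult_mat_vec_double_sum[OF A x x])
  also have "\<dots> \<le> (\<Sum>i<n. \<Sum>j<n. \<bar>A $$ (i,j)\<bar> * (x \<bullet> x))"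
  proof (intro sum_mono)
    fix i j assume "i \<in> {..<n}" "j \<in> {..<n}"
    then have "\<bar>x $ i * x $ j\<bar> \<le> x \<bullet> x" using x by (simp add: abs_mult_le_scalar_prod_self)
    have "A $$ (i,j) * x $ i * x $ j \<le> \<bar>A $$ (i,j)\<bar> * \<bar>x $ i * x $ j\<bar>"
      by (metis abs_ge_self abs_mult mult.assoc)
    also have "\<dots> \<le> \<bar>A $$ (i,j)\<bar> * (x \<bullet> x)"
      using \<open>\<bar>x $ i * x $ j\<bar> \<le> x \<bullet> x\<close> by (rule mult_left_mono) simp
    finally show "A $$ (i,j) * x $ i * x $ j \<le> \<bar>A $$ (i,j)\<bar> * (x \<bullet> x)" .
  qed
  also have "\<dots> = \<sigma> * (x \<bullet> x)" by (simp add: \<sigma>_def sum_distrib_right)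
  also have "\<dots> \<le> (\<sigma> + 1) * (x \<bullet> x)"
    using conjugate_square_ge_0_vec[of x] by (simp add: algebra_simps)
  finally show "x \<bullet> (A *\<^sub>v x) \<le> (\<sigma> + 1) * (x \<bullet> x)" .
qed

lemma symmetric_quadratic_form_add:
  fixes S :: "real mat"
  assumes S: "S \<in> carrier_mat n n" and sym: "symmetric_mat S"
    and x: "x \<in> carrier_vec n" and y: "y \<in> carrier_vec n"
  shows "(x + y) \<bullet> (S *\<^sub>v (x + y)) = x \<bullet> (S *\<^sub>v x) + 2 * (x \<bullet> (S *\<^sub>v y)) + y \<bullet> (S *\<^sub>v y)"
proof -
  have "y \<bullet> (S *\<^sub>v x) = (transpose_mat S *\<^sub>v y) \<bullet> x"
    by (rule transpose_vec_mult_scalar[OF S x y, symmetric])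
  also have "\<dots> = x \<bullet> (S *\<^sub>v y)"
    using sym S x y unfolding symmetric_mat_def by (simp add: comm_scalar_prod[of _ n])
  finally have "y \<bullet> (S *\<^sub>v x) = x \<bullet> (S *\<^sub>v y)" .
  then show ?thesis
    using S x y
    by (simp add: mult_add_distrib_mat_vec add_scalar_prod_distrib[of _ n] scalar_prod_add_distrib[of _ n])
qed

lemma psd_mult_mat_vec_bound:
  fixes S :: "real mat"
  assumes S: "S \<in> carrier_mat n n" and sym: "symmetric_mat S"
    and psd: "\<And>x. x \<in> carrier_vec n \<Longrightarrow> 0 \<le> x \<bullet> (S *\<^sub>v x)"
  shows "\<exists>\<sigma>>0. \<forall>x\<in>carrier_vec n. (S *\<^sub>v x) \<bullet> (S *\<^sub>v x) \<le> \<sigma> * (x \<bullet> (S *\<^sub>v x))"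
proof -
  obtain \<sigma> where \<sigma>: "\<sigma> > 0"
    and bound: "\<And>x. x \<in> carrier_vec n \<Longrightarrow> x \<bullet> (S *\<^sub>v x) \<le> \<sigma> * (x \<bullet> x)"
    using quadratic_form_bounded[OF S] by blast
  have "(S *\<^sub>v x) \<bullet> (S *\<^sub>v x) \<le> \<sigma> * (x \<bullet> (S *\<^sub>v x))" if x: "x \<in> carrier_vec n" for x
  proof -
    define w where "w = S *\<^sub>v x"
    define y where "y = (- 1 / \<sigma>) \<cdot>\<^sub>v w"
    have w: "w \<in> carrier_vec n" and y: "y \<in> carrier_vec n" using S x by (auto simp: w_def y_def)
    have "x \<bullet> (S *\<^sub>v w) = (transpose_mat S *\<^sub>v x) \<bullet> w"
      by (rule transpose_vec_mult_scalar[OF S w x, symmetric])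
    also have "\<dots> = w \<bullet> w" using sym unfolding symmetric_mat_def w_def by simp
    finally have "x \<bullet> (S *\<^sub>v y) = - (w \<bullet> w) / \<sigma>"
      using S w x by (simp add: y_def mult_mat_vec)
    moreover have "y \<bullet> (S *\<^sub>v y) \<le> (w \<bullet> w) / \<sigma>"
      using bound[OF y] \<sigma> w by (simp add: y_def power2_eq_square)
    moreover have "0 \<le> (x + y) \<bullet> (S *\<^sub>v (x + y))" using psd x y by simp
    ultimately have "0 \<le> x \<bullet> (S *\<^sub>v x) - (w \<bullet> w) / \<sigma>"
      using symmetric_quadratic_form_add[OF S sym x y] by linarith
    then show ?thesis using \<sigma> by (simp add: w_def field_simps)
  qed
  with \<sigma> show ?thesis by blast
qed

lemma left_invertible_lower_bound:
  fixes S T :: "real mat"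
  assumes S: "S \<in> carrier_mat n n" and T: "T \<in> carrier_mat n n" and inv: "T * S = 1\<^sub>m n"
  shows "\<exists>\<tau>>0. \<forall>x\<in>carrier_vec n. x \<bullet> x \<le> \<tau> * ((S *\<^sub>v x) \<bullet> (S *\<^sub>v x))"
proof -
  obtain \<tau> where \<tau>: "\<tau> > 0"
    and bound: "\<And>w. w \<in> carrier_vec n \<Longrightarrow> w \<bullet> ((transpose_mat T * T) *\<^sub>v w) \<le> \<tau> * (w \<bullet> w)"
    using quadratic_form_bounded[of "transpose_mat T * T" n] T by auto
  have "x \<bullet> x \<le> \<tau> * ((S *\<^sub>v x) \<bullet> (S *\<^sub>v x))" if x: "x \<in> carrier_vec n" for x
  proof -
    define w where "w = S *\<^sub>v x"
    have w: "w \<in> carrier_vec n" using S x by (simp add: w_def)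
    have Tw: "T *\<^sub>v w = x"
      using S T x inv by (simp add: w_def assoc_mult_mat_vec[symmetric])
    have "x \<bullet> x = (transpose_mat T *\<^sub>v (T *\<^sub>v w)) \<bullet> w"
      unfolding Tw[symmetric] by (rule transpose_vec_mult_scalar[OF T w, symmetric]) (use T w in simp)
    also have "\<dots> = w \<bullet> ((transpose_mat T * T) *\<^sub>v w)"
      using T w by (simp add: comm_scalar_prod[of _ n])
    also have "\<dots> \<le> \<tau> * (w \<bullet> w)" by (rule bound[OF w])
    finally show ?thesis by (simp add: w_def)
  qed
  with \<tau> show ?thesis by blast
qed

lemma pos_def_coercive:
  fixes S :: "real mat"
  assumes S: "S \<in> carrier_mat n n" and sym: "symmetric_mat S"
    and pd: "\<And>x. x \<in> carrier_vec n \<Longrightarrow> x \<noteq> 0\<^sub>v n \<Longrightarrow> 0 < x \<bullet> (S *\<^sub>v x)"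
  shows "\<exists>c>0. \<forall>x\<in>carrier_vec n. c * (x \<bullet> x) \<le> x \<bullet> (S *\<^sub>v x)"
proof -
  have psd: "0 \<le> x \<bullet> (S *\<^sub>v x)" if "x \<in> carrier_vec n" for x
    using pd[OF that] that S by (cases "x = 0\<^sub>v n") auto
  have "det S \<noteq> 0"
  proof
    assume "det S = 0"
    then obtain v where "v \<in> carrier_vec n" "v \<noteq> 0\<^sub>v n" "S *\<^sub>v v = 0\<^sub>v n"
      using det_0_iff_vec_prod_zero[OF S] by auto
    then show False using pd[of v] by simp
  qed
  then obtain T where T: "T \<in> carrier_mat n n" "T * S = 1\<^sub>m n"
    using det_non_zero_imp_unit[OF S, of "()"] unfolding Units_def ring_mat_def by auto
  obtain \<tau> where \<tau>: "\<tau> > 0"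
    and lower: "\<And>x. x \<in> carrier_vec n \<Longrightarrow> x \<bullet> x \<le> \<tau> * ((S *\<^sub>v x) \<bullet> (S *\<^sub>v x))"
    using left_invertible_lower_bound[OF S T] by blast
  obtain \<sigma> where \<sigma>: "\<sigma> > 0"
    and upper: "\<And>x. x \<in> carrier_vec n \<Longrightarrow> (S *\<^sub>v x) \<bullet> (S *\<^sub>v x) \<le> \<sigma> * (x \<bullet> (S *\<^sub>v x))"
    using psd_mult_mat_vec_bound[OF S sym psd] by blast
  have "x \<bullet> x \<le> (\<tau> * \<sigma>) * (x \<bullet> (S *\<^sub>v x))" if "x \<in> carrier_vec n" for x
  proof -
    have "x \<bullet> x \<le> \<tau> * ((S *\<^sub>v x) \<bullet> (S *\<^sub>v x))" by (rule lower[OF that])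
    also have "\<dots> \<le> \<tau> * (\<sigma> * (x \<bullet> (S *\<^sub>v x)))"
      using upper[OF that] by (rule mult_left_mono) (use \<tau> in simp)
    finally show ?thesis by (simp add: mult.assoc)
  qed
  then have "1 / (\<tau> * \<sigma>) * (x \<bullet> x) \<le> x \<bullet> (S *\<^sub>v x)" if "x \<in> carrier_vec n" for x
    using that \<tau> \<sigma> by (simp add: field_simps)
  with \<tau> \<sigma> show ?thesis by (intro exI[of _ "1 / (\<tau> * \<sigma>)"]) auto
qed

lemma neg_def_coercive:
  fixes P :: "real mat"
  assumes P: "P \<in> carrier_mat n n" and sym: "symmetric_mat P" and nd: "neg_def n P"
  shows "\<exists>c>0. \<forall>x\<in>carrier_vec n. x \<bullet> (P *\<^sub>v x) \<le> - c * (x \<bullet> x)"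
proof -
  have "symmetric_mat (- P)" using sym by (simp add: symmetric_mat_def transpose_uminus)
  moreover have "0 < x \<bullet> (- P *\<^sub>v x)" if "x \<in> carrier_vec n" "x \<noteq> 0\<^sub>v n" for x
    using nd that P unfolding neg_def_def by simp
  ultimately obtain c where c: "c > 0"
    and le: "\<And>x. x \<in> carrier_vec n \<Longrightarrow> c * (x \<bullet> x) \<le> x \<bullet> (- P *\<^sub>v x)"
    using pos_def_coercive[of "- P" n] P by auto
  have "x \<bullet> (P *\<^sub>v x) \<le> - c * (x \<bullet> x)" if "x \<in> carrier_vec n" for x
    using le[OF that] P that by simp
  with c show ?thesis by blast
qed

lemma eigenvector_Re_Im:
  fixes M :: "real mat" and z :: "complex vec"
  assumes M: "M \<in> carrier_mat n n" and z: "z \<in> carrier_vec n" and ev: "cmat M *\<^sub>v z = l \<cdot>\<^sub>v z"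
  shows "M *\<^sub>v map_vec Re z = Re l \<cdot>\<^sub>v map_vec Re z - Im l \<cdot>\<^sub>v map_vec Im z"
    and "M *\<^sub>v map_vec Im z = Im l \<cdot>\<^sub>v map_vec Re z + Re l \<cdot>\<^sub>v map_vec Im z"
proof -
  have "(cmat M *\<^sub>v z) $ i = l * z $ i" if "i < n" for i
    using ev that z by (metis carrier_vecD index_smult_vec(1))
  moreover have "(cmat M *\<^sub>v z) $ i = (\<Sum>j<n. complex_of_real (M $$ (i,j)) * z $ j)" if "i < n" for i
    using M z that by (simp add: cmat_def scalar_prod_def atLeast0LessThan)
  ultimately have "(\<Sum>j<n. complex_of_real (M $$ (i,j)) * z $ j) = l * z $ i" if "i < n" for i
    using that by simp
  then have "Re (\<Sum>j<n. complex_of_real (M $$ (i,j)) * z $ j) = Re (l * z $ i)"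
    and "Im (\<Sum>j<n. complex_of_real (M $$ (i,j)) * z $ j) = Im (l * z $ i)" if "i < n" for i
    using that by auto
  then show "M *\<^sub>v map_vec Re z = Re l \<cdot>\<^sub>v map_vec Re z - Im l \<cdot>\<^sub>v map_vec Im z"
    and "M *\<^sub>v map_vec Im z = Im l \<cdot>\<^sub>v map_vec Re z + Re l \<cdot>\<^sub>v map_vec Im z"
    using M z by (auto intro!: eq_vecI simp: scalar_prod_def atLeast0LessThan Re_sum Im_sum algebra_simps)
qed

lemma eigenvalue_Re_le_quadratic_form_bound:
  fixes M :: "real mat"
  assumes M: "M \<in> carrier_mat n n"
    and bound: "\<And>x. x \<in> carrier_vec n \<Longrightarrow> x \<bullet> (M *\<^sub>v x) \<le> \<beta> * (x \<bullet> x)"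
    and ev: "eigenvalue (cmat M) l"
  shows "Re l \<le> \<beta>"
proof -
  obtain z where z: "z \<in> carrier_vec n" "z \<noteq> 0\<^sub>v n" "cmat M *\<^sub>v z = l \<cdot>\<^sub>v z"
    using ev M unfolding eigenvalue_def eigenvector_def by (auto simp: cmat_def)
  define u where "u = map_vec Re z"
  define v where "v = map_vec Im z"
  have u: "u \<in> carrier_vec n" and v: "v \<in> carrier_vec n" using z by (auto simp: u_def v_def)
  have "Re l * (u \<bullet> u + v \<bullet> v) = u \<bullet> (M *\<^sub>v u) + v \<bullet> (M *\<^sub>v v)"
    using eigenvector_Re_Im[OF M z(1) z(3)] u v
    by (simp add: u_def[symmetric] v_def[symmetric] scalar_prod_minus_distrib[of _ n]
        scalar_prod_add_distrib[of _ n] comm_scalar_prod[of u n v] algebra_simps)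
  also have "\<dots> \<le> \<beta> * (u \<bullet> u + v \<bullet> v)"
    using bound[OF u] bound[OF v] by (simp add: algebra_simps)
  finally have le: "Re l * (u \<bullet> u + v \<bullet> v) \<le> \<beta> * (u \<bullet> u + v \<bullet> v)" .
  have "u \<noteq> 0\<^sub>v n \<or> v \<noteq> 0\<^sub>v n"
  proof (rule ccontr)
    assume "\<not> ?thesis"
    then have "z = 0\<^sub>v n"
      using z(1) by (intro eq_vecI) (auto simp: u_def v_def vec_eq_iff complex_eq_iff)
    with z(2) show False ..
  qed
  then have "0 < u \<bullet> u + v \<bullet> v"
    using u v conjugate_square_greater_0_vec[OF u] conjugate_square_greater_0_vec[OF v]
      conjugate_square_ge_0_vec[of u] conjugate_square_ge_0_vec[of v]
    by (auto simp del: conjugate_square_greater_0_vec)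
  with le show ?thesis by simp
qed

lemma spectral_abscissa_le_quadratic_form_bound:
  fixes M :: "real mat"
  assumes M: "M \<in> carrier_mat n n" and n: "0 < n"
    and bound: "\<And>x. x \<in> carrier_vec n \<Longrightarrow> x \<bullet> (M *\<^sub>v x) \<le> \<beta> * (x \<bullet> x)"
  shows "spectral_abscissa M \<le> \<beta>"
proof -
  have cM: "cmat M \<in> carrier_mat n n" using M by (simp add: cmat_def)
  have "finite (spectrum (cmat M))" and "spectrum (cmat M) \<noteq> {}"
    using card_finite_spectrum(1)[OF cM] spectrum_non_empty[OF cM n] by auto
  then show ?thesis
    using eigenvalue_Re_le_quadratic_form_bound[OF M bound]
    unfolding spectral_abscissa_def spectrum_def by (subst Max_le_iff) auto
qed

lemma scaled_quadratic_le:
  fixes b t p q :: real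
  assumes b: "0 < b" and t: "b \<le> t" and q: "q \<le> 0"
  shows "t * p + t\<^sup>2 * q \<le> t / b * (b * p + b\<^sup>2 * q)"
proof -
  have "t / b * (b * p + b\<^sup>2 * q) = t * p + t * b * q"
    using b by (simp add: field_simps power2_eq_square)
  moreover have "t * (t - b) * q \<le> 0"
    using b t q by (intro mult_nonneg_nonpos) auto
  ultimately show ?thesis by (simp add: power2_eq_square algebra_simps)
qed

lemma quartic_pencil_coercive:
  fixes J2 J4 :: "real mat"
  assumes J2: "J2 \<in> carrier_mat n n" and J4: "J4 \<in> carrier_mat n n"
    and sym2: "symmetric_mat J2" and sym4: "symmetric_mat J4" and nsd: "neg_semidef n J4"
    and b: "0 < b" and nd: "neg_def n (b \<cdot>\<^sub>m J2 + b\<^sup>2 \<cdot>\<^sub>m J4)"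
  shows "\<exists>\<gamma>>0. \<forall>t\<ge>b. \<forall>x\<in>carrier_vec n.
           t * (x \<bullet> (J2 *\<^sub>v x)) + t\<^sup>2 * (x \<bullet> (J4 *\<^sub>v x)) \<le> - \<gamma> * t * (x \<bullet> x)"
proof -
  define P where "P = b \<cdot>\<^sub>m J2 + b\<^sup>2 \<cdot>\<^sub>m J4"
  have P: "P \<in> carrier_mat n n" using J2 J4 by (simp add: P_def)
  have "symmetric_mat P"
    using sym2 sym4 J2 J4 unfolding symmetric_mat_def P_def
    by (intro eq_matI) (auto simp: mat_eq_iff)
  then obtain c where c: "c > 0"
    and coercive: "\<And>x. x \<in> carrier_vec n \<Longrightarrow> x \<bullet> (P *\<^sub>v x) \<le> - c * (x \<bullet> x)"
    using neg_def_coercive[OF P] nd unfolding P_def by blast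
  have "t * (x \<bullet> (J2 *\<^sub>v x)) + t\<^sup>2 * (x \<bullet> (J4 *\<^sub>v x)) \<le> - (c / b) * t * (x \<bullet> x)"
    if t: "b \<le> t" and x: "x \<in> carrier_vec n" for t x
  proof -
    have "t * (x \<bullet> (J2 *\<^sub>v x)) + t\<^sup>2 * (x \<bullet> (J4 *\<^sub>v x))
        \<le> t / b * (b * (x \<bullet> (J2 *\<^sub>v x)) + b\<^sup>2 * (x \<bullet> (J4 *\<^sub>v x)))"
      using nsd x b t unfolding neg_semidef_def by (intro scaled_quadratic_le) auto
    also have "\<dots> = t / b * (x \<bullet> (P *\<^sub>v x))"
      using J2 J4 x by (simp add: P_def quadratic_form_add[of _ n] quadratic_form_smult[of _ n])
    also have "\<dots> \<le> t / b * (- c * (x \<bullet> x))"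
      using coercive[OF x] b t by (intro mult_left_mono) auto
    finally show ?thesis by (simp add: mult_ac)
  qed
  moreover have "c / b > 0" using b c by simp
  ultimately show ?thesis by blast
qed

lemma spectral_abscissa_quartic_perturbation_tendsto_at_bot:
  fixes A J2 J4 :: "real mat"
  assumes n: "0 < n" and A: "A \<in> carrier_mat n n"
    and J2: "J2 \<in> carrier_mat n n" and J4: "J4 \<in> carrier_mat n n"
    and sym2: "symmetric_mat J2" and sym4: "symmetric_mat J4" and nsd: "neg_semidef n J4"
    and nd: "neg_def n (\<kappa>\<^sub>0^2 \<cdot>\<^sub>m J2 + \<kappa>\<^sub>0^4 \<cdot>\<^sub>m J4)"
  shows "filterlim (\<lambda>\<kappa>. spectral_abscissa (A + \<kappa>^2 \<cdot>\<^sub>m J2 + \<kappa>^4 \<cdot>\<^sub>m J4)) at_bot at_top"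
proof -
  define b where "b = \<kappa>\<^sub>0^2"
  have nd_b: "neg_def n (b \<cdot>\<^sub>m J2 + b\<^sup>2 \<cdot>\<^sub>m J4)"
    using nd by (simp add: b_def power_mult[symmetric])
  have "b \<noteq> 0"
  proof
    assume "b = 0"
    then have "unit_vec n 0 \<bullet> ((b \<cdot>\<^sub>m J2 + b\<^sup>2 \<cdot>\<^sub>m J4) *\<^sub>v unit_vec n 0) = 0"
      using J2 J4 by (simp add: quadratic_form_add[of _ n] quadratic_form_smult[of _ n])
    moreover have "unit_vec n 0 \<noteq> 0\<^sub>v n"
      using n by (metis index_unit_vec(1) index_zero_vec(1) zero_neq_one)
    ultimately show False using nd_b unit_vec_carrier[of n 0] unfolding neg_def_def by (metis less_irrefl)
  qed
  then have "0 < b" by (simp add: b_def)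
  then obtain \<gamma> where \<gamma>: "\<gamma> > 0" and pencil: "\<And>t x. b \<le> t \<Longrightarrow> x \<in> carrier_vec n \<Longrightarrow>
      t * (x \<bullet> (J2 *\<^sub>v x)) + t\<^sup>2 * (x \<bullet> (J4 *\<^sub>v x)) \<le> - \<gamma> * t * (x \<bullet> x)"
    using quartic_pencil_coercive[OF J2 J4 sym2 sym4 nsd _ nd_b] by blast
  obtain \<alpha> where bound_A: "\<And>x. x \<in> carrier_vec n \<Longrightarrow> x \<bullet> (A *\<^sub>v x) \<le> \<alpha> * (x \<bullet> x)"
    using quadratic_form_bounded[OF A] by blast
  have bound: "x \<bullet> ((A + \<kappa>^2 \<cdot>\<^sub>m J2 + \<kappa>^4 \<cdot>\<^sub>m J4) *\<^sub>v x) \<le> (\<alpha> - \<gamma> * \<kappa>\<^sup>2) * (x \<bullet> x)"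
    if \<kappa>: "b \<le> \<kappa>\<^sup>2" and x: "x \<in> carrier_vec n" for \<kappa> x
  proof -
    have "x \<bullet> ((A + \<kappa>^2 \<cdot>\<^sub>m J2 + \<kappa>^4 \<cdot>\<^sub>m J4) *\<^sub>v x)
        = x \<bullet> (A *\<^sub>v x) + (\<kappa>\<^sup>2 * (x \<bullet> (J2 *\<^sub>v x)) + (\<kappa>\<^sup>2)\<^sup>2 * (x \<bullet> (J4 *\<^sub>v x)))"
      using A J2 J4 x
      by (simp add: quadratic_form_add[of _ n] quadratic_form_smult[of _ n] power_mult[symmetric])
    also have "\<dots> \<le> \<alpha> * (x \<bullet> x) + - \<gamma> * \<kappa>\<^sup>2 * (x \<bullet> x)"
      using bound_A[OF x] pencil[OF \<kappa> x] by (rule add_mono)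
    finally show ?thesis by (simp add: algebra_simps)
  qed
  have "\<forall>\<^sub>F \<kappa> in at_top. spectral_abscissa (A + \<kappa>^2 \<cdot>\<^sub>m J2 + \<kappa>^4 \<cdot>\<^sub>m J4) \<le> \<alpha> - \<gamma> * \<kappa>\<^sup>2"
    using eventually_ge_at_top[of "sqrt b"]
  proof eventually_elim
    case (elim \<kappa>)
    then have "b \<le> \<kappa>\<^sup>2" using \<open>0 < b\<close> by (metis less_eq_real_def real_le_rsqrt sqrt_le_D)
    then show ?case using A J2 J4 n bound by (intro spectral_abscissa_le_quadratic_form_bound) auto
  qed
  moreover have "filterlim (\<lambda>\<kappa>. \<alpha> - \<gamma> * \<kappa>\<^sup>2) at_bot at_top"
    using \<gamma> by real_asymp
  ultimately show ?thesis
    by (auto simp: filterlim_at_bot elim: eventually_elim2 intro: order_trans)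
qed

theorem lemma1:
  fixes n m :: nat and B C :: "int mat" and lo hi :: "nat \<Rightarrow> real"
    and J2 J4 :: "real mat" and \<Delta> :: "real mat"
  assumes "n \<ge> 1" and "m \<ge> 1"
    and "B \<in> carrier_mat n m" and "C \<in> carrier_mat m n"
    and "\<forall>j<m. 0 \<le> lo j \<and> lo j \<le> hi j"
    and "J2 \<in> carrier_mat n n" and "J4 \<in> carrier_mat n n"
    and "symmetric_mat J2" and "symmetric_mat J4"
    and "indefinite n J2" and "neg_semidef n J4"
    and "\<exists>\<kappa>b::real. neg_def n (\<kappa>b^2 \<cdot>\<^sub>m J2 + \<kappa>b^4 \<cdot>\<^sub>m J4)"
    and "\<forall>D \<in> Dset m lo hi. det (rmat B * D * rmat C) = 0 \<and>
            num_neg_eigs (rmat B * D * rmat C) = n - 1"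
    and "\<exists>v \<in> carrier_vec n. v \<noteq> 0\<^sub>v n \<and> (\<forall>i<n. v $ i \<ge> 0) \<and>
            transpose_mat (rmat B) *\<^sub>v v = 0\<^sub>v m"
    and "\<Delta> \<in> Dset m lo hi"
  shows "filterlim (\<lambda>\<kappa>. spectral_abscissa (Mk B C J2 J4 \<Delta> \<kappa>)) at_bot at_top"
proof -
  obtain \<kappa>\<^sub>0 :: real where "neg_def n (\<kappa>\<^sub>0^2 \<cdot>\<^sub>m J2 + \<kappa>\<^sub>0^4 \<cdot>\<^sub>m J4)"
    using assms(12) by blast
  moreover have "rmat B * \<Delta> * rmat C \<in> carrier_mat n n"
    using assms(3,4,15) by (auto simp: rmat_def Dset_def)
  ultimately show ?thesis
    unfolding Mk_def using assms(1,6-9,11)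
    by (intro spectral_abscissa_quartic_perturbation_tendsto_at_bot) auto
qed

end
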